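(* Consider the unbounded variant of the reserve price problem with $n=2$ samples, $d=2$ features and $X=\mathbb{R}^2$: $\max_{\beta\in\mathbb{R}^2}\frac12\sum_{i=1}^2 r(w^i\cdot\beta;b_i^{(1)},b_i^{(2)})$. There exists a sequence of such instances in which all problem data ($w^1,w^2\in\mathbb{R}^2$ with $\|w^1\|_2,\|w^2\|_2\le 1$, and bids $b_i^{(1)},b_i^{(2)}\in[0,1]$) are bounded in magnitude by one, each instance has a unique optimal solution $\beta^*$, and $\|\beta^*\|$ grows arbitrarily large along the sequence.
   Context: The reward function is $r(v;b^{(1)},b^{(2)})=b^{(2)}$ if $v\le b^{(2)}$, $=v$ if $b^{(2)}<v\le b^{(1)}$, and $=0$ if $v>b^{(1)}$, for bids $b^{(1)}\ge b^{(2)}\ge0$. *)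

theory Defs
  imports "HOL-Analysis.Analysis"
begin

text \<open>Reward of reserve price v given highest bid b1 and second bid b2 (b1 \<ge> b2 \<ge> 0).\<close>
definition reward :: "real \<Rightarrow> real \<Rightarrow> real \<Rightarrow> real" where
  "reward v b1 b2 = (if v \<le> b2 then b2 else if v \<le> b1 then v else 0)"

definition rp_obj :: "real^2 \<Rightarrow> real^2 \<Rightarrow> real \<Rightarrow> real \<Rightarrow> real \<Rightarrow> real \<Rightarrow> real^2 \<Rightarrow> real" where
  "rp_obj w1 w2 b11 b12 b21 b22 \<beta> =
     (1/2) * (reward (w1 \<bullet> \<beta>) b11 b12 + reward (w2 \<bullet> \<beta>) b21 b22)"

end

theory Submission
  imports Defs
begin

text \<open>With second bids zero, the reward of a sample never exceeds its first bid and attains it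
  exactly when the reserve price equals that bid. Hence the objective is at most the mean of the
  first bids, and it is maximised precisely by the solutions of the linear system stating that
  each \<open>w\<^sup>i \<bullet> \<beta>\<close> equals the first bid of sample \<open>i\<close>. Taking \<open>w\<^sup>1 = (1/2, 0)\<close> and
  \<open>w\<^sup>2 = (1/2, \<epsilon>)\<close> with first bids \<open>1\<close> and \<open>1/2\<close>, the system has the
  unique solution \<open>(2, -1/(2\<epsilon>))\<close>, which is unbounded as \<open>\<epsilon> \<rightarrow> 0\<close>.\<close>

lemma reward_le_first_bid:
  assumes "b2 \<le> b1" "0 \<le> b1"
  shows "reward v b1 b2 \<le> b1"
  using assms by (simp add: reward_def)

lemma reward_eq_first_bid_iff:
  assumes "b2 < b1" "0 < b1"
  shows "reward v b1 b2 = b1 \<longleftrightarrow> v = b1"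
  using assms by (auto simp: reward_def)

lemma rp_obj_le_mean_first_bids:
  assumes "b12 \<le> b11" "0 \<le> b11" "b22 \<le> b21" "0 \<le> b21"
  shows "rp_obj w1 w2 b11 b12 b21 b22 \<gamma> \<le> (b11 + b21) / 2"
  using reward_le_first_bid[OF assms(1,2), of "w1 \<bullet> \<gamma>"]
    reward_le_first_bid[OF assms(3,4), of "w2 \<bullet> \<gamma>"]
  by (simp add: rp_obj_def)

lemma rp_obj_eq_mean_first_bids_iff:
  assumes "b12 < b11" "0 < b11" "b22 < b21" "0 < b21"
  shows "rp_obj w1 w2 b11 b12 b21 b22 \<gamma> = (b11 + b21) / 2 \<longleftrightarrow> w1 \<bullet> \<gamma> = b11 \<and> w2 \<bullet> \<gamma> = b21"
  using reward_le_first_bid[of b12 b11 "w1 \<bullet> \<gamma>"] reward_le_first_bid[of b22 b21 "w2 \<bullet> \<gamma>"]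
    reward_eq_first_bid_iff[OF assms(1,2), of "w1 \<bullet> \<gamma>"]
    reward_eq_first_bid_iff[OF assms(3,4), of "w2 \<bullet> \<gamma>"] assms
  by (auto simp: rp_obj_def)

lemma rp_obj_unique_max_of_unique_solution:
  assumes bids: "b12 < b11" "0 < b11" "b22 < b21" "0 < b21"
    and solution: "w1 \<bullet> \<beta> = b11" "w2 \<bullet> \<beta> = b21"
    and unique: "\<And>\<gamma>. w1 \<bullet> \<gamma> = b11 \<Longrightarrow> w2 \<bullet> \<gamma> = b21 \<Longrightarrow> \<gamma> = \<beta>"
  defines "f \<equiv> rp_obj w1 w2 b11 b12 b21 b22"
  shows "(\<forall>\<gamma>. f \<gamma> \<le> f \<beta>) \<and> (\<forall>\<gamma>. (\<forall>\<delta>. f \<delta> \<le> f \<gamma>) \<longrightarrow> \<gamma> = \<beta>)"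
proof -
  have le: "f \<gamma> \<le> (b11 + b21) / 2" for \<gamma>
    unfolding f_def using bids by (intro rp_obj_le_mean_first_bids) auto
  have eq: "f \<gamma> = (b11 + b21) / 2 \<longleftrightarrow> w1 \<bullet> \<gamma> = b11 \<and> w2 \<bullet> \<gamma> = b21" for \<gamma>
    unfolding f_def using rp_obj_eq_mean_first_bids_iff[OF bids] .
  have max: "f \<beta> = (b11 + b21) / 2"
    using eq solution by blast
  show ?thesis
  proof (intro conjI allI impI)
    show "f \<gamma> \<le> f \<beta>" for \<gamma>
      using le[of \<gamma>] max by linarith
    show "\<gamma> = \<beta>" if "\<forall>\<delta>. f \<delta> \<le> f \<gamma>" for \<gamma>
      using that[rule_format, of \<beta>] le[of \<gamma>] max eq[of \<gamma>] unique by auto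
  qed
qed

lemma norm_vector_2: "norm (vector [a, b] :: real^2) = sqrt (a\<^sup>2 + b\<^sup>2)"
  by (simp add: norm_vec_def L2_set_def sum_2)

lemma inner_vector_2: "(vector [a, b] :: real^2) \<bullet> x = a * x $ 1 + b * x $ 2"
  by (simp add: inner_vec_def sum_2)

lemma ill_conditioned_system_solution_iff:
  fixes \<epsilon> :: real and \<gamma> :: "real^2"
  assumes "\<epsilon> \<noteq> 0"
  shows "vector [1/2, 0] \<bullet> \<gamma> = 1 \<and> vector [1/2, \<epsilon>] \<bullet> \<gamma> = 1/2
         \<longleftrightarrow> \<gamma> = vector [2, - 1 / (2 * \<epsilon>)]"
  using assms by (auto simp: inner_vector_2 vec_eq_iff forall_2 field_simps)

theorem proposition4:
  "\<exists>(w1 :: nat \<Rightarrow> real^2) (w2 :: nat \<Rightarrow> real^2) (b11 :: nat \<Rightarrow> real) (b12 :: nat \<Rightarrow> real)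
      (b21 :: nat \<Rightarrow> real) (b22 :: nat \<Rightarrow> real) (\<beta> :: nat \<Rightarrow> real^2).
     (\<forall>k. norm (w1 k) \<le> 1 \<and> norm (w2 k) \<le> 1 \<and>
          0 \<le> b12 k \<and> b12 k \<le> b11 k \<and> b11 k \<le> 1 \<and>
          0 \<le> b22 k \<and> b22 k \<le> b21 k \<and> b21 k \<le> 1 \<and>
          (\<forall>\<gamma>. rp_obj (w1 k) (w2 k) (b11 k) (b12 k) (b21 k) (b22 k) \<gamma>
                 \<le> rp_obj (w1 k) (w2 k) (b11 k) (b12 k) (b21 k) (b22 k) (\<beta> k)) \<and>
          (\<forall>\<gamma>. (\<forall>\<delta>. rp_obj (w1 k) (w2 k) (b11 k) (b12 k) (b21 k) (b22 k) \<delta>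
                      \<le> rp_obj (w1 k) (w2 k) (b11 k) (b12 k) (b21 k) (b22 k) \<gamma>) \<longrightarrow> \<gamma> = \<beta> k))
     \<and> filterlim (\<lambda>k. norm (\<beta> k)) at_top sequentially"
proof -
  define \<epsilon> :: "nat \<Rightarrow> real" where "\<epsilon> k = 1 / (2 * real k + 2)" for k
  define \<beta> :: "nat \<Rightarrow> real^2" where "\<beta> k = vector [2, - 1 / (2 * \<epsilon> k)]" for k
  have \<epsilon>: "0 < \<epsilon> k" "\<epsilon> k \<le> 1/2" for k
    by (auto simp: \<epsilon>_def field_simps)
  have norm_w2: "norm (vector [1/2, \<epsilon> k] :: real^2) \<le> 1" for k
    using mult_mono[OF \<epsilon>(2)[of k] \<epsilon>(2)[of k]] \<epsilon>(1)[of k]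
    by (simp add: norm_vector_2 real_sqrt_le_1_iff power2_eq_square)
  let ?f = "\<lambda>k. rp_obj (vector [1/2, 0]) (vector [1/2, \<epsilon> k]) 1 0 (1/2) 0"
  have optimal: "(\<forall>\<gamma>. ?f k \<gamma> \<le> ?f k (\<beta> k)) \<and> (\<forall>\<gamma>. (\<forall>\<delta>. ?f k \<delta> \<le> ?f k \<gamma>) \<longrightarrow> \<gamma> = \<beta> k)" for k
    unfolding \<beta>_def
    using ill_conditioned_system_solution_iff[of "\<epsilon> k"] \<epsilon>(1)[of k]
    by (intro rp_obj_unique_max_of_unique_solution) auto
  have "real k \<le> norm (\<beta> k)" for k
    using component_le_norm_cart[of "\<beta> k" 2] by (simp add: \<beta>_def \<epsilon>_def)
  then have "filterlim (\<lambda>k. norm (\<beta> k)) at_top sequentially"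
    by (intro filterlim_at_top_mono[OF filterlim_real_sequentially] always_eventually) auto
  then show ?thesis
    using optimal norm_w2
    by (intro exI[of _ "\<lambda>_. vector [1/2, 0]"] exI[of _ "\<lambda>k. vector [1/2, \<epsilon> k]"]
        exI[of _ "\<lambda>_. 1"] exI[of _ "\<lambda>_. 0"] exI[of _ "\<lambda>_. 1/2"] exI[of _ "\<lambda>_. 0"] exI[of _ \<beta>])
      (simp add: norm_vector_2)
qed

end
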